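(* For any $\boldsymbol{x},\boldsymbol{x}^\star\in\mathbb{T}^3$ there exist $N\in\mathbb{N}$ and $\underline{\omega}^N=(\omega_1,\dots,\omega_N)\in\Omega_0^N$ such that $f_{\underline{\omega}^N}(\boldsymbol{x})=\boldsymbol{x}^\star$; that is, the one-point process is exactly controllable.
   Context: $\mathbb{T}^3=\mathbb{R}^3/(2\pi\mathbb{Z})^3$ with points $\boldsymbol{x}=(x,y,z)$. Fix $U>0$ and let $\Omega_0=[-U,U]^3\times[0,2\pi)^3$, with elements $\omega=(\mathsf{A},\mathsf{B},\mathsf{C},\alpha,\beta,\gamma)$. Define maps of $\mathbb{T}^3$: $f_{(\mathsf{A},\alpha)}(x,y,z)=(x+\mathsf{A}\sin(z+\alpha),\ y+\mathsf{A}\cos(z+\alpha),\ z)$, $f_{(\mathsf{B},\beta)}(x,y,z)=(x,\ y+\mathsf{B}\sin(x+\beta),\ z+\mathsf{B}\cos(x+\beta))$, $f_{(\mathsf{C},\gamma)}(x,y,z)=(x+\mathsf{C}\cos(y+\gamma),\ y,\ z+\mathsf{C}\sin(y+\gamma))$, and $f_\omega=f_{(\mathsf{C},\gamma)}\circ f_{(\mathsf{B},\beta)}\circ f_{(\mathsf{A},\alpha)}$. For $\underline{\omega}^N=(\omega_1,\dots,\omega_N)\in\Omega_0^N$, $f_{\underline{\omega}^N}=f_{\omega_N}\circ\cdots\circ f_{\omega_1}$. *)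

theory Defs
  imports Complex_Main
begin

text \<open>Points of the torus T^3 = R^3/(2 pi Z)^3 are represented by real triples;
  equality on the torus is componentwise congruence modulo 2 pi.\<close>

type_synonym pt = "real \<times> real \<times> real"

definition cong2pi :: "real \<Rightarrow> real \<Rightarrow> bool" where
  "cong2pi a b \<longleftrightarrow> (\<exists>k::int. a - b = 2 * pi * of_int k)"

definition torus_eq :: "pt \<Rightarrow> pt \<Rightarrow> bool" where
  "torus_eq p q \<longleftrightarrow> cong2pi (fst p) (fst q) \<and> cong2pi (fst (snd p)) (fst (snd q))
                    \<and> cong2pi (snd (snd p)) (snd (snd q))"

definition fA :: "real \<Rightarrow> real \<Rightarrow> pt \<Rightarrow> pt" where
  "fA A \<alpha> p = (case p of (x, y, z) \<Rightarrow> (x + A * sin (z + \<alpha>), y + A * cos (z + \<alpha>), z))"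

definition fB :: "real \<Rightarrow> real \<Rightarrow> pt \<Rightarrow> pt" where
  "fB B \<beta> p = (case p of (x, y, z) \<Rightarrow> (x, y + B * sin (x + \<beta>), z + B * cos (x + \<beta>)))"

definition fC :: "real \<Rightarrow> real \<Rightarrow> pt \<Rightarrow> pt" where
  "fC C \<gamma> p = (case p of (x, y, z) \<Rightarrow> (x + C * cos (y + \<gamma>), y, z + C * sin (y + \<gamma>)))"

type_synonym omega = "real \<times> real \<times> real \<times> real \<times> real \<times> real"

definition f_omega :: "omega \<Rightarrow> pt \<Rightarrow> pt" where
  "f_omega w = (case w of (A, B, C, \<alpha>, \<beta>, \<gamma>) \<Rightarrow> fC C \<gamma> \<circ> fB B \<beta> \<circ> fA A \<alpha>)"

definition Omega0 :: "real \<Rightarrow> omega set" where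
  "Omega0 U = {(A, B, C, \<alpha>, \<beta>, \<gamma>). A \<in> {-U..U} \<and> B \<in> {-U..U} \<and> C \<in> {-U..U}
      \<and> \<alpha> \<in> {0..<2*pi} \<and> \<beta> \<in> {0..<2*pi} \<and> \<gamma> \<in> {0..<2*pi}}"

text \<open>For ws = [w_1, ..., w_N]: f_seq ws = f_{w_N} o ... o f_{w_1} (w_1 applied first).\<close>
definition f_seq :: "omega list \<Rightarrow> pt \<Rightarrow> pt" where
  "f_seq ws = fold f_omega ws"

end

theory Submission
  imports Defs
begin

text \<open>Each of the three shears, with all other amplitudes zero, translates a single coordinate
  by its amplitude once its phase is chosen so that the trigonometric factor equals 1 and the
  other one 0 at the current point; the shears for x and y leave z fixed, and the one for z
  leaves x fixed, so the right phase stays valid under repetition. Splitting a displacement into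
  n equal steps of size at most U then reaches any target, even exactly in R^3.\<close>

definition phase :: "real \<Rightarrow> real" where
  "phase t = 2 * pi * frac (t / (2 * pi))"

lemma phase_range: "phase t \<in> {0..<2*pi}"
  using frac_lt_1[of "t / (2 * pi)"] by (simp add: phase_def)

lemma sin_cos_add_phase: "sin (s + phase (t - s)) = sin t \<and> cos (s + phase (t - s)) = cos t"
proof -
  have "s + phase (t - s) = t + 2 * pi * of_int (- \<lfloor>(t - s) / (2 * pi)\<rfloor>)"
    by (simp add: phase_def frac_def field_simps)
  then show ?thesis
    using sin_cos_eq_iff by blast
qed

definition shift_x :: "real \<Rightarrow> real \<Rightarrow> omega" where
  "shift_x z a = (a, 0, 0, phase (pi / 2 - z), 0, 0)"

definition shift_y :: "real \<Rightarrow> real \<Rightarrow> omega" where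
  "shift_y z a = (a, 0, 0, phase (- z), 0, 0)"

definition shift_z :: "real \<Rightarrow> real \<Rightarrow> omega" where
  "shift_z x a = (0, a, 0, 0, phase (- x), 0)"

lemma shift_in_Omega0:
  assumes "\<bar>a\<bar> \<le> U"
  shows "shift_x z a \<in> Omega0 U" "shift_y z a \<in> Omega0 U" "shift_z x a \<in> Omega0 U"
  using assms phase_range by (auto simp: shift_x_def shift_y_def shift_z_def Omega0_def)

lemma f_omega_shift_x: "f_omega (shift_x z a) (x, y, z) = (x + a, y, z)"
  using sin_cos_add_phase[of z "pi / 2"]
  by (simp add: shift_x_def f_omega_def fA_def fB_def fC_def)

lemma f_omega_shift_y: "f_omega (shift_y z a) (x, y, z) = (x, y + a, z)"
  using sin_cos_add_phase[of z 0]
  by (simp add: shift_y_def f_omega_def fA_def fB_def fC_def)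

lemma f_omega_shift_z: "f_omega (shift_z x a) (x, y, z) = (x, y, z + a)"
  using sin_cos_add_phase[of x 0]
  by (simp add: shift_z_def f_omega_def fA_def fB_def fC_def)

lemma fold_replicate_shift_x:
  "fold f_omega (replicate n (shift_x z a)) (x, y, z) = (x + real n * a, y, z)"
  by (induction n arbitrary: x) (simp_all add: f_omega_shift_x algebra_simps del: fold_replicate)

lemma fold_replicate_shift_y:
  "fold f_omega (replicate n (shift_y z a)) (x, y, z) = (x, y + real n * a, z)"
  by (induction n arbitrary: y) (simp_all add: f_omega_shift_y algebra_simps del: fold_replicate)

lemma fold_replicate_shift_z:
  "fold f_omega (replicate n (shift_z x a)) (x, y, z) = (x, y, z + real n * a)"
  by (induction n arbitrary: z) (simp_all add: f_omega_shift_z algebra_simps del: fold_replicate)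

lemma f_seq_shifts:
  assumes "n > 0"
  shows "f_seq (replicate n (shift_x z ((x' - x) / n)) @ replicate n (shift_y z ((y' - y) / n))
                @ replicate n (shift_z x' ((z' - z) / n))) (x, y, z) = (x', y', z')"
proof -
  have "x + real n * ((x' - x) / n) = x'"
    using assms by simp
  then show ?thesis
    using assms
    by (simp add: f_seq_def fold_replicate_shift_x fold_replicate_shift_y fold_replicate_shift_z
             del: fold_replicate)
qed

lemma ex_steps_bounded:
  fixes M U :: real
  assumes "U > 0"
  obtains n :: nat where "n \<ge> 1" "\<And>d. \<bar>d\<bar> \<le> M \<Longrightarrow> \<bar>d / real n\<bar> \<le> U"
proof -
  obtain m :: nat where m: "M / U < real m"
    using reals_Archimedean2 by blast
  have "\<bar>d / real (Suc m)\<bar> \<le> U" if "\<bar>d\<bar> \<le> M" for d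
  proof -
    from that m assms have "\<bar>d\<bar> \<le> real (Suc m) * U"
      by (simp add: field_simps)
    then show ?thesis
      by (simp add: abs_divide field_simps)
  qed
  then show thesis
    using that[of "Suc m"] by simp
qed

lemma torus_eq_refl: "torus_eq p p"
  unfolding torus_eq_def cong2pi_def by (auto intro: exI[of _ 0])

theorem lemma3p1:
  fixes U :: real and x xstar :: pt
  assumes "U > 0"
  shows "\<exists>ws::omega list. length ws \<ge> 1 \<and> set ws \<subseteq> Omega0 U
           \<and> torus_eq (f_seq ws x) xstar"
proof -
  obtain x1 y1 z1 where x: "x = (x1, y1, z1)" by (cases x)
  obtain x2 y2 z2 where xstar: "xstar = (x2, y2, z2)" by (cases xstar)
  obtain n :: nat where n: "n \<ge> 1"
    and step: "\<And>d. \<bar>d\<bar> \<le> \<bar>x2 - x1\<bar> + \<bar>y2 - y1\<bar> + \<bar>z2 - z1\<bar> \<Longrightarrow> \<bar>d / real n\<bar> \<le> U"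
    using ex_steps_bounded[OF assms] by blast
  define ws where "ws = replicate n (shift_x z1 ((x2 - x1) / n)) @ replicate n (shift_y z1 ((y2 - y1) / n))
      @ replicate n (shift_z x2 ((z2 - z1) / n))"
  have "set ws \<subseteq> Omega0 U"
    unfolding ws_def by (auto intro!: shift_in_Omega0 step)
  moreover have "f_seq ws x = xstar"
    unfolding ws_def x xstar using n by (intro f_seq_shifts) simp
  moreover have "length ws \<ge> 1"
    using n by (simp add: ws_def)
  ultimately show ?thesis
    using torus_eq_refl by metis
qed

end
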